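(* There exist unital endomorphisms of $C^1[0,1]$ which are Riesz operators but are not power compact. For example, the endomorphism $f\mapsto f\circ\phi$ with $\phi(x)=x^2/2$ is such an endomorphism.
   Context: $C^1[0,1]$ is the Banach algebra of continuously differentiable functions on $[0,1]$ with norm $\|f\|_\infty+\|f'\|_\infty$. A bounded operator $T$ is a Riesz operator if $\lim_{n}\left[\inf\{\|T^n-K\|:K \text{ compact}\}\right]^{1/n}=0$; it is power compact if $T^N$ is compact for some positive integer $N$. *)

theory Defs
  imports "HOL-Analysis.Analysis"
begin

text \<open>Elements of C^1[0,1] are represented canonically as functions real => real
  that vanish outside [0,1], are differentiable (one-sidedly at the endpoints,
  i.e. within [0,1]) at every point of [0,1], with derivative continuous on [0,1].\<close>

definition c1deriv :: "(real \<Rightarrow> real) \<Rightarrow> real \<Rightarrow> real" where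
  "c1deriv f x = vector_derivative f (at x within {0..1})"

definition C1 :: "(real \<Rightarrow> real) set" where
  "C1 = {f. (\<forall>x\<in>{0..1}. f differentiable (at x within {0..1}))
          \<and> continuous_on {0..1} (c1deriv f)
          \<and> (\<forall>x. x \<notin> {0..1} \<longrightarrow> f x = 0)}"

definition c1norm :: "(real \<Rightarrow> real) \<Rightarrow> real" where
  "c1norm f = (SUP x\<in>{0..1}. \<bar>f x\<bar>) + (SUP x\<in>{0..1}. \<bar>c1deriv f x\<bar>)"

definition bounded_op :: "((real \<Rightarrow> real) \<Rightarrow> (real \<Rightarrow> real)) \<Rightarrow> bool" where
  "bounded_op T \<longleftrightarrow>
     (\<forall>f\<in>C1. T f \<in> C1)
   \<and> (\<forall>f\<in>C1. \<forall>g\<in>C1. \<forall>a::real. T (\<lambda>x. a * f x + g x) = (\<lambda>x. a * T f x + T g x))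
   \<and> (\<exists>C. \<forall>f\<in>C1. c1norm (T f) \<le> C * c1norm f)"

definition opnorm :: "((real \<Rightarrow> real) \<Rightarrow> (real \<Rightarrow> real)) \<Rightarrow> real" where
  "opnorm T = Sup {c1norm (T f) | f. f \<in> C1 \<and> c1norm f \<le> 1}"

definition compact_C1op :: "((real \<Rightarrow> real) \<Rightarrow> (real \<Rightarrow> real)) \<Rightarrow> bool" where
  "compact_C1op K \<longleftrightarrow> bounded_op K \<and>
     (\<forall>u::nat \<Rightarrow> real \<Rightarrow> real. (\<forall>n. u n \<in> C1 \<and> c1norm (u n) \<le> 1) \<longrightarrow>
        (\<exists>(r::nat \<Rightarrow> nat) g. strict_mono r \<and> g \<in> C1 \<and>
               (\<lambda>n. c1norm (\<lambda>x. K (u (r n)) x - g x)) \<longlonglongrightarrow> 0))"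

definition essnorm :: "((real \<Rightarrow> real) \<Rightarrow> (real \<Rightarrow> real)) \<Rightarrow> real" where
  "essnorm T = Inf {opnorm (\<lambda>f x. T f x - K f x) | K. compact_C1op K}"

definition riesz_op :: "((real \<Rightarrow> real) \<Rightarrow> (real \<Rightarrow> real)) \<Rightarrow> bool" where
  "riesz_op T \<longleftrightarrow> bounded_op T \<and> (\<lambda>n. root n (essnorm (T ^^ n))) \<longlonglongrightarrow> 0"

definition power_compact :: "((real \<Rightarrow> real) \<Rightarrow> (real \<Rightarrow> real)) \<Rightarrow> bool" where
  "power_compact T \<longleftrightarrow> (\<exists>N::nat. N > 0 \<and> compact_C1op (T ^^ N))"

definition one_C1 :: "real \<Rightarrow> real" where
  "one_C1 x = (if x \<in> {0..1} then 1 else 0)"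

definition unital_endo :: "((real \<Rightarrow> real) \<Rightarrow> (real \<Rightarrow> real)) \<Rightarrow> bool" where
  "unital_endo T \<longleftrightarrow> bounded_op T
     \<and> (\<forall>f\<in>C1. \<forall>g\<in>C1. T (\<lambda>x. f x * g x) = (\<lambda>x. T f x * T g x))
     \<and> T one_C1 = one_C1"

definition comp_op :: "(real \<Rightarrow> real) \<Rightarrow> (real \<Rightarrow> real)" where
  "comp_op f = (\<lambda>x. if x \<in> {0..1} then f (x^2 / 2) else 0)"

end

theory Submission
  imports Defs "HOL-Real_Asymp.Real_Asymp"
begin

text \<open>
  The \<open>n\<close>-th power of \<open>T f = f \<circ> \<phi>\<close> is composition with the \<open>n\<close>-th iterate \<open>\<phi>\<^sub>n\<close>
  of \<open>\<phi> x = x\<^sup>2 / 2\<close>. On \<open>[0,1]\<close> both \<open>\<phi>\<^sub>n\<close> and \<open>\<phi>\<^sub>n' = \<Prod>k<n. \<phi>\<^sub>k\<close> are bounded by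
  \<open>\<Prod>k<n. 2\<^sup>-\<^sup>k = 2 powr (-n(n-1)/2)\<close>, so by the mean value theorem \<open>T\<^sup>n\<close> is within
  \<open>2 \<cdot> 2 powr (-n(n-1)/2)\<close> of the rank-one operator \<open>f \<mapsto> f(0) \<cdot> 1\<close>. This decay is
  superexponential, so the \<open>n\<close>-th roots of the essential norms tend to \<open>0\<close>.

  Yet no power \<open>T\<^sup>N\<close> is compact: with \<open>b = \<phi>\<^sub>N(1)\<close>, the functions
  \<open>u\<^sub>k(t) = arctan (k(t - b)) / (3k)\<close> form a bounded sequence in \<open>C\<^sup>1\<close> whose derivatives
  tend pointwise to \<open>1/3\<close> at \<open>b\<close> and to \<open>0\<close> elsewhere. Since \<open>\<phi>\<^sub>N(x) < b\<close> for \<open>x < 1\<close> and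
  \<open>\<phi>\<^sub>N'(1) > 0\<close>, the derivatives of \<open>T\<^sup>N u\<^sub>k\<close> tend pointwise to a function that vanishes
  on \<open>[0,1)\<close> but not at \<open>1\<close>; so no subsequence converges in \<open>C\<^sup>1\<close>, whose limit would
  have a continuous derivative.
\<close>

section \<open>The space \<open>C\<^sup>1[0,1]\<close>\<close>

lemma c1deriv_eqI:
  assumes "x \<in> {0..1}" and "(f has_vector_derivative d) (at x within {0..1})"
  shows "c1deriv f x = d"
  using vector_derivative_within_cbox[of 0 1 x f d] assms by (simp add: c1deriv_def)

lemma C1_has_vector_derivative:
  assumes "f \<in> C1" and "x \<in> {0..1}"
  shows "(f has_vector_derivative c1deriv f x) (at x within {0..1})"
  using assms vector_derivative_works unfolding C1_def c1deriv_def by blast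

lemma C1_continuous_on_c1deriv: "f \<in> C1 \<Longrightarrow> continuous_on {0..1} (c1deriv f)"
  by (simp add: C1_def)

lemma C1_continuous_on: "f \<in> C1 \<Longrightarrow> continuous_on {0..1} f"
  unfolding C1_def continuous_on_eq_continuous_within
  by (auto intro: differentiable_imp_continuous_within)

lemma C1I:
  assumes "\<And>x. x \<in> {0..1} \<Longrightarrow> (f has_vector_derivative f' x) (at x within {0..1})"
    and "continuous_on {0..1} f'"
    and "\<And>x. x \<notin> {0..1} \<Longrightarrow> f x = 0"
  shows "f \<in> C1"
proof -
  have "continuous_on {0..1} (c1deriv f)"
    using assms(2) by (rule continuous_on_eq) (simp add: c1deriv_eqI[OF _ assms(1)])
  then show ?thesis
    using assms(1,3) unfolding C1_def by (blast intro: differentiableI_vector)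
qed

lemma abs_le_SUP_abs:
  fixes g :: "real \<Rightarrow> real"
  assumes "continuous_on {0..1} g" and "x \<in> {0..1}"
  shows "\<bar>g x\<bar> \<le> (SUP y\<in>{0..1}. \<bar>g y\<bar>)"
proof -
  have "compact ((\<lambda>y. \<bar>g y\<bar>) ` {0..1})"
    by (intro compact_continuous_image continuous_on_rabs assms(1)) simp
  then have "bdd_above ((\<lambda>y. \<bar>g y\<bar>) ` {0..1})"
    by (intro bounded_imp_bdd_above compact_imp_bounded)
  then show ?thesis using assms(2) by (rule cSUP_upper2) simp
qed

lemma abs_le_c1norm:
  assumes "f \<in> C1" and "x \<in> {0..1}"
  shows "\<bar>f x\<bar> \<le> c1norm f" and "\<bar>c1deriv f x\<bar> \<le> c1norm f"
proof -
  have "\<bar>f x\<bar> \<le> (SUP y\<in>{0..1}. \<bar>f y\<bar>)" "\<bar>c1deriv f x\<bar> \<le> (SUP y\<in>{0..1}. \<bar>c1deriv f y\<bar>)"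
    using abs_le_SUP_abs assms C1_continuous_on C1_continuous_on_c1deriv by blast+
  then show "\<bar>f x\<bar> \<le> c1norm f" and "\<bar>c1deriv f x\<bar> \<le> c1norm f"
    unfolding c1norm_def by linarith+
qed

lemma c1norm_nonneg: "f \<in> C1 \<Longrightarrow> 0 \<le> c1norm f"
  using abs_le_c1norm(1)[of f 0] by force

lemma c1norm_le:
  assumes "\<And>x. x \<in> {0..1} \<Longrightarrow> (f has_vector_derivative f' x) (at x within {0..1})"
    and "\<And>x. x \<in> {0..1} \<Longrightarrow> \<bar>f x\<bar> \<le> A"
    and "\<And>x. x \<in> {0..1} \<Longrightarrow> \<bar>f' x\<bar> \<le> B"
  shows "c1norm f \<le> A + B"
proof -
  have "(SUP x\<in>{0..1}. \<bar>f x\<bar>) \<le> A"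
    using assms(2) by (intro cSUP_least) auto
  moreover have "(SUP x\<in>{0..1}. \<bar>c1deriv f x\<bar>) \<le> B"
    using assms(3) by (intro cSUP_least) (auto simp: c1deriv_eqI[OF _ assms(1)])
  ultimately show ?thesis unfolding c1norm_def by simp
qed

lemma
  assumes "f \<in> C1" and "g \<in> C1"
  shows C1_diff: "(\<lambda>x. f x - g x) \<in> C1"
    and c1deriv_diff: "x \<in> {0..1} \<Longrightarrow> c1deriv (\<lambda>x. f x - g x) x = c1deriv f x - c1deriv g x"
proof -
  have deriv: "((\<lambda>x. f x - g x) has_vector_derivative c1deriv f x - c1deriv g x) (at x within {0..1})"
    if "x \<in> {0..1}" for x
    using assms that by (intro has_vector_derivative_diff C1_has_vector_derivative)
  show "(\<lambda>x. f x - g x) \<in> C1"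
  proof (rule C1I[OF deriv])
    show "continuous_on {0..1} (\<lambda>x. c1deriv f x - c1deriv g x)"
      using assms by (intro continuous_intros C1_continuous_on_c1deriv)
  qed (use assms in \<open>auto simp: C1_def\<close>)
  show "x \<in> {0..1} \<Longrightarrow> c1deriv (\<lambda>x. f x - g x) x = c1deriv f x - c1deriv g x"
    by (rule c1deriv_eqI[OF _ deriv])
qed

lemma c1norm_diff_le:
  assumes "f \<in> C1" and "g \<in> C1"
  shows "c1norm (\<lambda>x. f x - g x) \<le> c1norm f + c1norm g"
proof -
  have "c1norm (\<lambda>x. f x - g x) \<le> ((SUP x\<in>{0..1}. \<bar>f x\<bar>) + (SUP x\<in>{0..1}. \<bar>g x\<bar>))
      + ((SUP x\<in>{0..1}. \<bar>c1deriv f x\<bar>) + (SUP x\<in>{0..1}. \<bar>c1deriv g x\<bar>))"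
  proof (rule c1norm_le)
    fix x :: real assume x: "x \<in> {0..1}"
    show "((\<lambda>x. f x - g x) has_vector_derivative c1deriv f x - c1deriv g x) (at x within {0..1})"
      using assms x by (intro has_vector_derivative_diff C1_has_vector_derivative)
    have "\<bar>f x\<bar> \<le> (SUP x\<in>{0..1}. \<bar>f x\<bar>)" "\<bar>g x\<bar> \<le> (SUP x\<in>{0..1}. \<bar>g x\<bar>)"
      "\<bar>c1deriv f x\<bar> \<le> (SUP x\<in>{0..1}. \<bar>c1deriv f x\<bar>)" "\<bar>c1deriv g x\<bar> \<le> (SUP x\<in>{0..1}. \<bar>c1deriv g x\<bar>)"
      using abs_le_SUP_abs x assms C1_continuous_on C1_continuous_on_c1deriv by blast+
    then show "\<bar>f x - g x\<bar> \<le> (SUP x\<in>{0..1}. \<bar>f x\<bar>) + (SUP x\<in>{0..1}. \<bar>g x\<bar>)"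
      and "\<bar>c1deriv f x - c1deriv g x\<bar>
             \<le> (SUP x\<in>{0..1}. \<bar>c1deriv f x\<bar>) + (SUP x\<in>{0..1}. \<bar>c1deriv g x\<bar>)"
      by linarith+
  qed
  then show ?thesis unfolding c1norm_def by linarith
qed

lemma one_C1_has_vector_derivative:
  "x \<in> {0..1} \<Longrightarrow> ((\<lambda>x. c * one_C1 x) has_vector_derivative 0) (at x within {0..1})"
  by (rule has_vector_derivative_transform[OF _ _ has_vector_derivative_const[of c]])
    (simp_all add: one_C1_def)

lemma
  fixes c :: real
  shows C1_const: "(\<lambda>x. c * one_C1 x) \<in> C1"
    and c1norm_const_le: "c1norm (\<lambda>x. c * one_C1 x) \<le> \<bar>c\<bar>"
proof -
  show "(\<lambda>x. c * one_C1 x) \<in> C1"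
    by (rule C1I[OF one_C1_has_vector_derivative]) (auto simp: one_C1_def)
  have "c1norm (\<lambda>x. c * one_C1 x) \<le> \<bar>c\<bar> + 0"
    by (rule c1norm_le[OF one_C1_has_vector_derivative]) (auto simp: one_C1_def)
  then show "c1norm (\<lambda>x. c * one_C1 x) \<le> \<bar>c\<bar>" by simp
qed

lemma c1deriv_tendsto_of_c1norm_tendsto:
  assumes "\<And>n. u n \<in> C1" and "g \<in> C1" and "x \<in> {0..1}"
    and "(\<lambda>n. c1norm (\<lambda>x. u n x - g x)) \<longlonglongrightarrow> 0"
  shows "(\<lambda>n. c1deriv (u n) x) \<longlonglongrightarrow> c1deriv g x"
proof -
  have "norm (c1deriv (u n) x - c1deriv g x) \<le> c1norm (\<lambda>x. u n x - g x)" for n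
    using abs_le_c1norm(2)[OF C1_diff[OF assms(1,2)] assms(3)] c1deriv_diff[OF assms(1,2,3)]
    by simp
  then have "(\<lambda>n. c1deriv (u n) x - c1deriv g x) \<longlonglongrightarrow> 0"
    by (intro Lim_null_comparison[OF _ assms(4)] always_eventually) blast
  then show ?thesis by (simp add: LIM_zero_iff)
qed

definition arctan_ramp :: "real \<Rightarrow> nat \<Rightarrow> real \<Rightarrow> real" where
  "arctan_ramp b k t =
     (if t \<in> {0..1} then arctan (real (Suc k) * (t - b)) / (3 * real (Suc k)) else 0)"

lemma arctan_ramp_has_vector_derivative:
  assumes "t \<in> {0..1}"
  shows "(arctan_ramp b k has_vector_derivative 1 / (3 * (1 + (real (Suc k) * (t - b))\<^sup>2)))
           (at t within {0..1})"
proof -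
  define c where "c = real (Suc k)"
  have "c > 0" by (simp add: c_def)
  have "1 + (c * (t - b))\<^sup>2 \<noteq> 0" by (simp add: add_nonneg_eq_0_iff)
  then have "((\<lambda>t. arctan (c * (t - b)) / (3 * c)) has_real_derivative
      1 / (3 * (1 + (c * (t - b))\<^sup>2))) (at t within {0..1})"
    using \<open>c > 0\<close> by (auto intro!: derivative_eq_intros simp: divide_simps)
  then show ?thesis
    unfolding has_real_derivative_iff_has_vector_derivative c_def
    by (rule has_vector_derivative_transform[OF assms, rotated]) (simp add: arctan_ramp_def)
qed

lemma
  shows arctan_ramp_in_C1: "arctan_ramp b k \<in> C1"
    and c1deriv_arctan_ramp:
      "t \<in> {0..1} \<Longrightarrow> c1deriv (arctan_ramp b k) t = 1 / (3 * (1 + (real (Suc k) * (t - b))\<^sup>2))"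
    and c1norm_arctan_ramp_le: "c1norm (arctan_ramp b k) \<le> 1"
proof -
  have pos: "0 < 1 + (real (Suc k) * (t - b))\<^sup>2" for t
    by (simp add: add_pos_nonneg)
  show "arctan_ramp b k \<in> C1"
    by (rule C1I[OF arctan_ramp_has_vector_derivative])
      (auto intro!: continuous_intros simp: arctan_ramp_def add_nonneg_eq_0_iff)
  show "t \<in> {0..1} \<Longrightarrow> c1deriv (arctan_ramp b k) t = 1 / (3 * (1 + (real (Suc k) * (t - b))\<^sup>2))"
    by (rule c1deriv_eqI[OF _ arctan_ramp_has_vector_derivative])
  have "c1norm (arctan_ramp b k) \<le> 2/3 + 1/3"
  proof (rule c1norm_le[OF arctan_ramp_has_vector_derivative])
    fix t :: real assume t: "t \<in> {0..1}"
    have "\<bar>arctan (real (Suc k) * (t - b))\<bar> \<le> 2"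
      using arctan_bounded[of "real (Suc k) * (t - b)"] pi_less_4 by linarith
    then have "\<bar>arctan (real (Suc k) * (t - b))\<bar> / (3 * real (Suc k)) \<le> 2 / 3"
      by (simp add: divide_le_eq)
    then show "\<bar>arctan_ramp b k t\<bar> \<le> 2/3"
      by (simp add: arctan_ramp_def abs_divide)
    show "\<bar>1 / (3 * (1 + (real (Suc k) * (t - b))\<^sup>2))\<bar> \<le> 1/3"
      using pos[of t] by (simp add: divide_le_eq)
  qed
  then show "c1norm (arctan_ramp b k) \<le> 1" by simp
qed

lemma c1deriv_arctan_ramp_tendsto_0:
  assumes "t \<in> {0..1}" and "t \<noteq> b"
  shows "(\<lambda>k. c1deriv (arctan_ramp b k) t) \<longlonglongrightarrow> 0"
proof -
  have "(t - b)\<^sup>2 > 0" using assms(2) by simp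
  then have "(\<lambda>k::nat. 1 / (3 * (1 + (real k + 1)\<^sup>2 * (t - b)\<^sup>2))) \<longlonglongrightarrow> 0"
    by real_asymp
  then show ?thesis
    using assms(1) by (simp add: c1deriv_arctan_ramp power_mult_distrib add.commute)
qed

section \<open>Bounded and compact operators, essential norm\<close>

lemma bounded_opD:
  assumes "bounded_op T"
  shows "f \<in> C1 \<Longrightarrow> T f \<in> C1"
    and "f \<in> C1 \<Longrightarrow> g \<in> C1 \<Longrightarrow> T (\<lambda>x. a * f x + g x) = (\<lambda>x. a * T f x + T g x)"
    and "\<exists>C\<ge>0. \<forall>f\<in>C1. c1norm (T f) \<le> C * c1norm f"
proof -
  show "f \<in> C1 \<Longrightarrow> T f \<in> C1"
    and "f \<in> C1 \<Longrightarrow> g \<in> C1 \<Longrightarrow> T (\<lambda>x. a * f x + g x) = (\<lambda>x. a * T f x + T g x)"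
    using assms unfolding bounded_op_def by blast+
  obtain C where C: "\<forall>f\<in>C1. c1norm (T f) \<le> C * c1norm f"
    using assms unfolding bounded_op_def by blast
  have "c1norm (T f) \<le> max C 0 * c1norm f" if "f \<in> C1" for f
  proof -
    have "C * c1norm f \<le> max C 0 * c1norm f"
      using c1norm_nonneg[OF that] by (intro mult_right_mono) auto
    then show ?thesis using C that by fastforce
  qed
  then show "\<exists>C\<ge>0. \<forall>f\<in>C1. c1norm (T f) \<le> C * c1norm f"
    by (intro exI[of _ "max C 0"]) auto
qed

lemma bounded_op_id: "bounded_op id"
  unfolding bounded_op_def by (auto intro: exI[of _ 1])

lemma bounded_op_comp:
  assumes S: "bounded_op S" and T: "bounded_op T"
  shows "bounded_op (S \<circ> T)"
  unfolding bounded_op_def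
proof (intro conjI ballI allI)
  fix f assume "f \<in> C1"
  then show "(S \<circ> T) f \<in> C1" using bounded_opD(1) S T by simp
next
  fix f g a assume "f \<in> C1" "g \<in> C1"
  then show "(S \<circ> T) (\<lambda>x. a * f x + g x) = (\<lambda>x. a * (S \<circ> T) f x + (S \<circ> T) g x)"
    using bounded_opD(1,2) S T by simp
next
  obtain C D where "C \<ge> 0" and C: "\<forall>f\<in>C1. c1norm (S f) \<le> C * c1norm f"
    and D: "\<forall>f\<in>C1. c1norm (T f) \<le> D * c1norm f"
    using bounded_opD(3) S T by metis
  have "c1norm (S (T f)) \<le> (C * D) * c1norm f" if "f \<in> C1" for f
  proof -
    have "c1norm (S (T f)) \<le> C * c1norm (T f)" using C bounded_opD(1)[OF T that] by blast
    also have "\<dots> \<le> C * (D * c1norm f)" using D that \<open>C \<ge> 0\<close> by (simp add: mult_left_mono)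
    finally show ?thesis by simp
  qed
  then show "\<exists>E. \<forall>f\<in>C1. c1norm ((S \<circ> T) f) \<le> E * c1norm f" by auto
qed

lemma bounded_op_funpow: "bounded_op T \<Longrightarrow> bounded_op (T ^^ n)"
  by (induction n) (simp_all add: bounded_op_id bounded_op_comp)

lemma bounded_op_diff:
  assumes T: "bounded_op T" and K: "bounded_op K"
  shows "bounded_op (\<lambda>f x. T f x - K f x)"
  unfolding bounded_op_def
proof (intro conjI ballI allI)
  fix f assume "f \<in> C1"
  show "(\<lambda>x. T f x - K f x) \<in> C1"
    by (rule C1_diff[OF bounded_opD(1)[OF T \<open>f \<in> C1\<close>] bounded_opD(1)[OF K \<open>f \<in> C1\<close>]])
next
  fix f g a assume "f \<in> C1" "g \<in> C1"
  then show "(\<lambda>x. T (\<lambda>x. a * f x + g x) x - K (\<lambda>x. a * f x + g x) x)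
      = (\<lambda>x. a * (T f x - K f x) + (T g x - K g x))"
    using bounded_opD(2) T K by (simp add: algebra_simps)
next
  obtain C D where C: "\<forall>f\<in>C1. c1norm (T f) \<le> C * c1norm f"
    and D: "\<forall>f\<in>C1. c1norm (K f) \<le> D * c1norm f"
    using bounded_opD(3) T K by metis
  have "c1norm (\<lambda>x. T f x - K f x) \<le> (C + D) * c1norm f" if "f \<in> C1" for f
    using c1norm_diff_le[OF bounded_opD(1)[OF T that] bounded_opD(1)[OF K that]] C D that
    by (fastforce simp: distrib_right)
  then show "\<exists>E. \<forall>f\<in>C1. c1norm (\<lambda>x. T f x - K f x) \<le> E * c1norm f" by auto
qed

lemma opnorm_le:
  assumes "\<And>f. f \<in> C1 \<Longrightarrow> c1norm f \<le> 1 \<Longrightarrow> c1norm (T f) \<le> c"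
  shows "opnorm T \<le> c"
  unfolding opnorm_def using assms C1_const[of 0] c1norm_const_le[of 0]
  by (intro cSup_least) auto

lemma opnorm_nonneg:
  assumes "bounded_op T"
  shows "0 \<le> opnorm T"
proof -
  define Z where "Z = {c1norm (T f) | f. f \<in> C1 \<and> c1norm f \<le> 1}"
  obtain C where "C \<ge> 0" and C: "\<forall>f\<in>C1. c1norm (T f) \<le> C * c1norm f"
    using bounded_opD(3)[OF assms] by blast
  have "c1norm (T f) \<le> C" if "f \<in> C1" "c1norm f \<le> 1" for f
    using C that \<open>C \<ge> 0\<close> by (meson order_trans mult_left_le)
  then have "bdd_above Z" unfolding Z_def bdd_above_def by blast
  moreover have zero: "(\<lambda>x. 0 * one_C1 x) \<in> C1" and "c1norm (\<lambda>x. 0 * one_C1 x) \<le> 1"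
    using C1_const[of 0] c1norm_const_le[of 0] by auto
  then have "c1norm (T (\<lambda>x. 0 * one_C1 x)) \<in> Z" unfolding Z_def by blast
  ultimately have "c1norm (T (\<lambda>x. 0 * one_C1 x)) \<le> Sup Z" by (rule cSup_upper[rotated])
  moreover have "0 \<le> c1norm (T (\<lambda>x. 0 * one_C1 x))"
    by (intro c1norm_nonneg bounded_opD(1)[OF assms zero])
  ultimately show ?thesis unfolding opnorm_def Z_def by linarith
qed

definition point_eval_op :: "real \<Rightarrow> (real \<Rightarrow> real) \<Rightarrow> real \<Rightarrow> real" where
  "point_eval_op a f = (\<lambda>x. f a * one_C1 x)"

lemma bounded_op_point_eval_op:
  assumes a: "a \<in> {0..1}"
  shows "bounded_op (point_eval_op a)"
    unfolding bounded_op_def point_eval_op_def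
  proof (intro conjI ballI allI exI)
    fix f assume "f \<in> C1"
    show "(\<lambda>x. f a * one_C1 x) \<in> C1" by (rule C1_const)
    have "c1norm (\<lambda>x. f a * one_C1 x) \<le> \<bar>f a\<bar>" by (rule c1norm_const_le)
    also have "\<dots> \<le> c1norm f" using abs_le_c1norm(1)[OF \<open>f \<in> C1\<close> a] .
    finally show "c1norm (\<lambda>x. f a * one_C1 x) \<le> 1 * c1norm f" by simp
  qed (simp add: algebra_simps)

lemma compact_point_eval_op:
  assumes a: "a \<in> {0..1}"
  shows "compact_C1op (point_eval_op a)"
  unfolding compact_C1op_def
proof (intro conjI allI impI bounded_op_point_eval_op[OF a])
  fix u :: "nat \<Rightarrow> real \<Rightarrow> real"
  assume u: "\<forall>n. u n \<in> C1 \<and> c1norm (u n) \<le> 1"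
  have "\<bar>u n a\<bar> \<le> 1" for n
    using u abs_le_c1norm(1)[OF _ a, of "u n"] by (meson order_trans)
  then have "bounded (range (\<lambda>n. u n a))"
    by (intro boundedI[of _ 1]) auto
  then obtain l r where r: "strict_mono r" and l: "(\<lambda>n. u (r n) a) \<longlonglongrightarrow> l"
    using bounded_imp_convergent_subsequence unfolding comp_def by blast
  have lim: "(\<lambda>n. \<bar>u (r n) a - l\<bar>) \<longlonglongrightarrow> 0"
    using l by (intro tendsto_rabs_zero) (simp add: LIM_zero)
  have diff: "(\<lambda>x. point_eval_op a (u (r n)) x - l * one_C1 x)
      = (\<lambda>x. (u (r n) a - l) * one_C1 x)" for n
    by (simp add: point_eval_op_def left_diff_distrib)
  have "(\<lambda>n. c1norm (\<lambda>x. point_eval_op a (u (r n)) x - l * one_C1 x)) \<longlonglongrightarrow> 0"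
    unfolding diff
  proof (rule tendsto_sandwich[OF _ _ tendsto_const lim])
    show "\<forall>\<^sub>F n in sequentially. 0 \<le> c1norm (\<lambda>x. (u (r n) a - l) * one_C1 x)"
      by (simp add: c1norm_nonneg[OF C1_const])
    show "\<forall>\<^sub>F n in sequentially. c1norm (\<lambda>x. (u (r n) a - l) * one_C1 x) \<le> \<bar>u (r n) a - l\<bar>"
      by (simp add: c1norm_const_le)
  qed
  then show "\<exists>r g. strict_mono r \<and> g \<in> C1 \<and>
      (\<lambda>n. c1norm (\<lambda>x. point_eval_op a (u (r n)) x - g x)) \<longlonglongrightarrow> 0"
    using r C1_const[of l] by blast
qed

lemma
  assumes "bounded_op T"
  shows essnorm_nonneg: "0 \<le> essnorm T"
    and essnorm_le_opnorm_diff: "compact_C1op K \<Longrightarrow> essnorm T \<le> opnorm (\<lambda>f x. T f x - K f x)"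
proof -
  define S where "S = {opnorm (\<lambda>f x. T f x - K f x) | K. compact_C1op K}"
  have lower: "0 \<le> s" if "s \<in> S" for s
    using that assms unfolding S_def compact_C1op_def by (auto intro: opnorm_nonneg bounded_op_diff)
  then have "bdd_below S" by (auto simp: bdd_below_def)
  have "S \<noteq> {}"
    using compact_point_eval_op[of 0] unfolding S_def by auto
  then show "0 \<le> essnorm T"
    unfolding essnorm_def S_def[symmetric] using lower by (rule cInf_greatest)
  show "essnorm T \<le> opnorm (\<lambda>f x. T f x - K f x)" if "compact_C1op K"
    unfolding essnorm_def S_def[symmetric] using \<open>bdd_below S\<close> that
    by (intro cInf_lower) (auto simp: S_def)
qed

section \<open>Composition operators\<close>

definition compose_C1 :: "(real \<Rightarrow> real) \<Rightarrow> (real \<Rightarrow> real) \<Rightarrow> real \<Rightarrow> real" where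
  "compose_C1 \<psi> f = (\<lambda>x. if x \<in> {0..1} then f (\<psi> x) else 0)"

lemma compose_C1_id: "f \<in> C1 \<Longrightarrow> compose_C1 (\<lambda>x. x) f = f"
  by (auto simp: fun_eq_iff compose_C1_def C1_def)

lemma compose_C1_compose_C1:
  assumes "\<And>x. x \<in> {0..1} \<Longrightarrow> \<psi> x \<in> {0..1}"
  shows "compose_C1 \<psi> (compose_C1 \<phi> f) = compose_C1 (\<phi> \<circ> \<psi>) f"
  using assms by (simp add: fun_eq_iff compose_C1_def)

locale C1_self_map =
  fixes \<psi> \<psi>' :: "real \<Rightarrow> real"
  assumes maps_into: "x \<in> {0..1} \<Longrightarrow> \<psi> x \<in> {0..1}"
    and has_derivative: "x \<in> {0..1} \<Longrightarrow> (\<psi> has_real_derivative \<psi>' x) (at x within {0..1})"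
    and continuous_derivative: "continuous_on {0..1} \<psi>'"
begin

lemma compose_C1_has_vector_derivative:
  assumes f: "f \<in> C1" and x: "x \<in> {0..1}"
  shows "(compose_C1 \<psi> f has_vector_derivative c1deriv f (\<psi> x) * \<psi>' x) (at x within {0..1})"
proof -
  have "(f has_vector_derivative c1deriv f (\<psi> x)) (at (\<psi> x) within \<psi> ` {0..1})"
    using C1_has_vector_derivative[OF f maps_into[OF x]]
    by (rule has_vector_derivative_within_subset) (auto intro: maps_into)
  with has_derivative[OF x] have "(f \<circ> \<psi> has_vector_derivative c1deriv f (\<psi> x) * \<psi>' x) (at x within {0..1})"
    by (auto simp: has_real_derivative_iff_has_vector_derivative mult.commute
        dest: vector_diff_chain_within)
  then show ?thesis
    by (rule has_vector_derivative_transform[OF x, rotated]) (simp add: compose_C1_def)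
qed

lemma
  assumes f: "f \<in> C1"
  shows compose_C1_in_C1: "compose_C1 \<psi> f \<in> C1"
    and c1deriv_compose_C1: "x \<in> {0..1} \<Longrightarrow> c1deriv (compose_C1 \<psi> f) x = c1deriv f (\<psi> x) * \<psi>' x"
proof -
  have cont: "continuous_on {0..1} (\<lambda>x. c1deriv f (\<psi> x))"
  proof (rule continuous_on_compose2[OF C1_continuous_on_c1deriv[OF f]])
    show "continuous_on {0..1} \<psi>"
      using has_derivative by (rule DERIV_continuous_on)
  qed (auto intro: maps_into)
  show "compose_C1 \<psi> f \<in> C1"
    by (rule C1I[OF compose_C1_has_vector_derivative[OF f]])
      (auto intro: continuous_intros cont continuous_derivative simp: compose_C1_def)
  show "x \<in> {0..1} \<Longrightarrow> c1deriv (compose_C1 \<psi> f) x = c1deriv f (\<psi> x) * \<psi>' x"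
    by (rule c1deriv_eqI[OF _ compose_C1_has_vector_derivative[OF f]])
qed

lemma c1norm_compose_C1_le:
  assumes f: "f \<in> C1" and L: "\<And>x. x \<in> {0..1} \<Longrightarrow> \<bar>\<psi>' x\<bar> \<le> L"
  shows "c1norm (compose_C1 \<psi> f) \<le> (1 + L) * c1norm f"
proof -
  have "c1norm (compose_C1 \<psi> f) \<le> c1norm f + c1norm f * L"
  proof (rule c1norm_le[OF compose_C1_has_vector_derivative[OF f]])
    fix x :: real assume x: "x \<in> {0..1}"
    show "\<bar>compose_C1 \<psi> f x\<bar> \<le> c1norm f"
      using abs_le_c1norm(1)[OF f maps_into[OF x]] x by (simp add: compose_C1_def)
    show "\<bar>c1deriv f (\<psi> x) * \<psi>' x\<bar> \<le> c1norm f * L"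
      unfolding abs_mult using abs_le_c1norm(2)[OF f maps_into[OF x]] L[OF x]
      by (intro mult_mono) auto
  qed
  then show ?thesis by (simp add: algebra_simps)
qed

lemma bounded_op_compose_C1: "bounded_op (compose_C1 \<psi>)"
  unfolding bounded_op_def
proof (intro conjI ballI allI)
  show "\<exists>C. \<forall>f\<in>C1. c1norm (compose_C1 \<psi> f) \<le> C * c1norm f"
    using c1norm_compose_C1_le abs_le_SUP_abs[OF continuous_derivative] by blast
qed (use compose_C1_in_C1 in \<open>auto simp: compose_C1_def\<close>)

lemma unital_endo_compose_C1: "unital_endo (compose_C1 \<psi>)"
  unfolding unital_endo_def
  using bounded_op_compose_C1 maps_into by (auto simp: compose_C1_def one_C1_def)

lemma essnorm_le_if_eq_compose_C1:
  assumes T: "bounded_op T" and T_eq: "\<And>f. f \<in> C1 \<Longrightarrow> T f = compose_C1 \<psi> f"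
    and \<psi>_le: "\<And>x. x \<in> {0..1} \<Longrightarrow> \<bar>\<psi> x\<bar> \<le> \<beta>"
    and \<psi>'_le: "\<And>x. x \<in> {0..1} \<Longrightarrow> \<bar>\<psi>' x\<bar> \<le> \<beta>"
  shows "essnorm T \<le> 2 * \<beta>"
proof -
  have "opnorm (\<lambda>f x. T f x - point_eval_op 0 f x) \<le> 2 * \<beta>"
  proof (rule opnorm_le)
    fix f assume f: "f \<in> C1" and "c1norm f \<le> 1"
    then have f'_le: "\<bar>c1deriv f y\<bar> \<le> 1" if "y \<in> {0..1}" for y
      using abs_le_c1norm(2)[OF f that] by linarith
    have "c1norm (\<lambda>x. compose_C1 \<psi> f x - f 0 * one_C1 x) \<le> \<beta> + \<beta>"
    proof (rule c1norm_le)
      fix x :: real assume x: "x \<in> {0..1}"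
      show "((\<lambda>x. compose_C1 \<psi> f x - f 0 * one_C1 x) has_vector_derivative
          c1deriv f (\<psi> x) * \<psi>' x - 0) (at x within {0..1})"
        by (intro has_vector_derivative_diff compose_C1_has_vector_derivative
            one_C1_has_vector_derivative f x)
      have "\<bar>f (\<psi> x) - f 0\<bar> \<le> 1 * \<bar>\<psi> x - 0\<bar>"
        using field_differentiable_bound[of "{0..1}" f "c1deriv f" 1 "\<psi> x" 0]
          C1_has_vector_derivative[OF f] f'_le maps_into[OF x]
        by (simp add: has_real_derivative_iff_has_vector_derivative)
      then show "\<bar>compose_C1 \<psi> f x - f 0 * one_C1 x\<bar> \<le> \<beta>"
        using x \<psi>_le[OF x] by (simp add: compose_C1_def one_C1_def)
      show "\<bar>c1deriv f (\<psi> x) * \<psi>' x - 0\<bar> \<le> \<beta>"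
        using mult_left_le_one_le[OF abs_ge_zero abs_ge_zero f'_le[OF maps_into[OF x]], of "\<psi>' x"]
          \<psi>'_le[OF x]
        by (simp add: abs_mult)
    qed
    then show "c1norm (\<lambda>x. T f x - point_eval_op 0 f x) \<le> 2 * \<beta>"
      by (simp add: T_eq[OF f] point_eval_op_def)
  qed
  then show ?thesis
    using essnorm_le_opnorm_diff[OF T compact_point_eval_op] by fastforce
qed

lemma not_compact_C1op_if_eq_compose_C1:
  assumes K_eq: "\<And>f. f \<in> C1 \<Longrightarrow> K f = compose_C1 \<psi> f"
    and \<psi>_ne: "\<And>x. x \<in> {0..<1} \<Longrightarrow> \<psi> x \<noteq> \<psi> 1"
    and \<psi>'_1: "\<psi>' 1 \<noteq> 0"
  shows "\<not> compact_C1op K"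
proof
  assume "compact_C1op K"
  then obtain r g where r: "strict_mono r" and g: "g \<in> C1"
    and lim: "(\<lambda>n. c1norm (\<lambda>x. K (arctan_ramp (\<psi> 1) (r n)) x - g x)) \<longlonglongrightarrow> 0"
    using arctan_ramp_in_C1 c1norm_arctan_ramp_le unfolding compact_C1op_def by meson
  define v where "v n = compose_C1 \<psi> (arctan_ramp (\<psi> 1) (r n))" for n
  have v_C1: "v n \<in> C1" for n
    by (simp add: v_def compose_C1_in_C1 arctan_ramp_in_C1)
  have v_deriv: "c1deriv (v n) x = c1deriv (arctan_ramp (\<psi> 1) (r n)) (\<psi> x) * \<psi>' x"
    if "x \<in> {0..1}" for n x
    using that by (simp add: v_def c1deriv_compose_C1 arctan_ramp_in_C1)
  have g'_lim: "(\<lambda>n. c1deriv (v n) x) \<longlonglongrightarrow> c1deriv g x" if "x \<in> {0..1}" for x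
    using lim by (intro c1deriv_tendsto_of_c1norm_tendsto v_C1 g that)
      (simp add: v_def K_eq arctan_ramp_in_C1)
  have "c1deriv g x = 0" if x: "x \<in> {0..<1}" for x
  proof -
    have "(\<lambda>k. c1deriv (arctan_ramp (\<psi> 1) k) (\<psi> x)) \<longlonglongrightarrow> 0"
      using x \<psi>_ne maps_into by (intro c1deriv_arctan_ramp_tendsto_0) auto
    from LIMSEQ_subseq_LIMSEQ[OF tendsto_mult_left_zero[OF this] r]
    have "(\<lambda>n. c1deriv (v n) x) \<longlonglongrightarrow> 0"
      using x by (simp add: comp_def v_deriv)
    moreover have "(\<lambda>n. c1deriv (v n) x) \<longlonglongrightarrow> c1deriv g x"
      using x by (intro g'_lim) simp
    ultimately show ?thesis by (rule LIMSEQ_unique[symmetric])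
  qed
  then have "c1deriv g 1 = 0"
    using continuous_constant_on_closure[of "{0..<1}" "c1deriv g" 0 1]
      C1_continuous_on_c1deriv[OF g] by simp
  moreover have "c1deriv g 1 = \<psi>' 1 / 3"
  proof -
    have "(\<lambda>n. c1deriv (v n) 1) = (\<lambda>n. \<psi>' 1 / 3)"
      using maps_into by (simp add: v_deriv c1deriv_arctan_ramp)
    with g'_lim[of 1] show ?thesis by (simp add: LIMSEQ_const_iff)
  qed
  ultimately show False using \<psi>'_1 by simp
qed

end

section \<open>Iterates of \<open>x\<^sup>2 / 2\<close>\<close>

definition half_square_iter :: "nat \<Rightarrow> real \<Rightarrow> real" where
  "half_square_iter n = (\<lambda>x. x\<^sup>2 / 2) ^^ n"

definition half_square_iter_deriv :: "nat \<Rightarrow> real \<Rightarrow> real" where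
  "half_square_iter_deriv n x = (\<Prod>k<n. half_square_iter k x)"

lemma half_square_iter_0 [simp]: "half_square_iter 0 x = x"
  by (simp add: half_square_iter_def)

lemma half_square_iter_Suc: "half_square_iter (Suc n) x = (half_square_iter n x)\<^sup>2 / 2"
  by (simp add: half_square_iter_def)

lemma half_square_iter_Suc_right: "half_square_iter (Suc n) = half_square_iter n \<circ> half_square_iter 1"
  by (simp only: half_square_iter_def funpow_Suc_right One_nat_def funpow.simps(1) id_comp)

lemma half_square_iter_has_real_derivative:
  "(half_square_iter n has_real_derivative half_square_iter_deriv n x) (at x)"
proof (induction n)
  case 0
  show ?case by (simp add: half_square_iter_def half_square_iter_deriv_def)
next
  case (Suc n)
  have "((\<lambda>x. (half_square_iter n x)\<^sup>2 / 2) has_real_derivative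
      of_nat 2 * (half_square_iter_deriv n x * half_square_iter n x ^ (2 - Suc 0)) / 2) (at x)"
    by (intro DERIV_cdivide DERIV_power Suc)
  then show ?case
    by (simp add: half_square_iter_Suc half_square_iter_deriv_def mult.commute)
qed

lemma half_square_iter_le_pow:
  assumes "x \<in> {0..1}"
  shows "0 \<le> half_square_iter n x \<and> half_square_iter n x \<le> (1/2) ^ n"
proof (induction n)
  case (Suc n)
  have "half_square_iter n x \<le> 1"
    using Suc power_le_one[of "1/2::real" n] by linarith
  then have "(half_square_iter n x)\<^sup>2 \<le> half_square_iter n x * 1"
    using Suc unfolding power2_eq_square by (intro mult_left_mono) auto
  with Suc show ?case by (simp add: half_square_iter_Suc)
qed (use assms in simp)

lemma half_square_iter_in_unit_interval: "x \<in> {0..1} \<Longrightarrow> half_square_iter n x \<in> {0..1}"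
  using half_square_iter_le_pow[of x n] power_le_one[of "1/2::real" n] by auto

lemma half_square_iter_le_deriv:
  assumes "x \<in> {0..1}"
  shows "half_square_iter n x \<le> half_square_iter_deriv n x"
proof (induction n)
  case 0
  show ?case using assms by (simp add: half_square_iter_deriv_def)
next
  case (Suc n)
  have "0 \<le> half_square_iter n x" using half_square_iter_le_pow[OF assms] by blast
  then have "half_square_iter n x * half_square_iter n x
      \<le> half_square_iter n x * half_square_iter_deriv n x"
    using Suc by (rule mult_left_mono[rotated])
  then have "(half_square_iter n x)\<^sup>2 / 2 \<le> half_square_iter n x * half_square_iter_deriv n x"
    using mult_nonneg_nonneg[OF \<open>0 \<le> half_square_iter n x\<close> \<open>0 \<le> half_square_iter n x\<close>]
    unfolding power2_eq_square by linarith
  then show ?case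
    by (simp add: half_square_iter_Suc half_square_iter_deriv_def mult.commute)
qed

lemma half_square_iter_deriv_bounds:
  assumes "x \<in> {0..1}"
  shows "0 \<le> half_square_iter_deriv n x \<and> half_square_iter_deriv n x \<le> (\<Prod>k<n. (1/2) ^ k)"
  unfolding half_square_iter_deriv_def
  using half_square_iter_le_pow[OF assms] by (auto intro: prod_nonneg prod_mono)

lemma prod_half_powers: "(\<Prod>k<n. (1/2::real) ^ k) = (1/2) powr (real n * (real n - 1) / 2)"
proof (induction n)
  case (Suc n)
  have "(\<Prod>k<Suc n. (1/2::real) ^ k) = (1/2) powr (real n * (real n - 1) / 2) * (1/2) powr real n"
    by (simp add: Suc powr_realpow)
  also have "\<dots> = (1/2) powr (real n * (real n - 1) / 2 + real n)"
    by (simp add: powr_add)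
  also have "real n * (real n - 1) / 2 + real n = real (Suc n) * (real (Suc n) - 1) / 2"
    by (simp add: field_simps)
  finally show ?case .
qed simp

lemma C1_self_map_half_square_iter: "C1_self_map (half_square_iter n) (half_square_iter_deriv n)"
proof
  show "x \<in> {0..1} \<Longrightarrow> half_square_iter n x \<in> {0..1}" for x
    by (rule half_square_iter_in_unit_interval)
  show "(half_square_iter n has_real_derivative half_square_iter_deriv n x) (at x within {0..1})" for x
    by (rule has_field_derivative_at_within[OF half_square_iter_has_real_derivative])
  show "continuous_on {0..1} (half_square_iter_deriv n)"
    unfolding half_square_iter_deriv_def
    using half_square_iter_has_real_derivative
    by (intro continuous_intros has_real_derivative_imp_continuous_on) blast
qed

lemma half_square_iter_less_at_1:
  assumes "x \<in> {0..<1}"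
  shows "half_square_iter n x < half_square_iter n 1"
proof (induction n)
  case (Suc n)
  have "0 \<le> half_square_iter n x"
    using half_square_iter_le_pow[of x n] assms by simp
  with Suc have "(half_square_iter n x)\<^sup>2 < (half_square_iter n 1)\<^sup>2"
    by (intro power_strict_mono) auto
  then show ?case by (simp add: half_square_iter_Suc)
qed (use assms in simp)

lemma half_square_iter_deriv_1_pos: "0 < half_square_iter_deriv n 1"
proof -
  have "0 < half_square_iter k 1" for k
    by (induction k) (simp_all add: half_square_iter_Suc)
  then show ?thesis by (simp add: half_square_iter_deriv_def prod_pos)
qed

lemma comp_op_eq_compose_C1: "comp_op = compose_C1 (half_square_iter 1)"
  by (simp add: fun_eq_iff comp_op_def compose_C1_def half_square_iter_def)

lemma comp_op_funpow:
  assumes "f \<in> C1"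
  shows "(comp_op ^^ n) f = compose_C1 (half_square_iter n) f"
proof (induction n)
  case 0
  show ?case using compose_C1_id[OF assms] by (simp add: half_square_iter_def)
next
  case (Suc n)
  have "(comp_op ^^ Suc n) f = comp_op (compose_C1 (half_square_iter n) f)"
    by (simp add: Suc)
  also have "\<dots> = compose_C1 (half_square_iter n \<circ> half_square_iter 1) f"
    unfolding comp_op_eq_compose_C1
    by (rule compose_C1_compose_C1) (rule half_square_iter_in_unit_interval)
  also have "\<dots> = compose_C1 (half_square_iter (Suc n)) f"
    by (simp only: half_square_iter_Suc_right)
  finally show ?case .
qed

lemma unital_endo_comp_op: "unital_endo comp_op"
  unfolding comp_op_eq_compose_C1
  by (rule C1_self_map.unital_endo_compose_C1[OF C1_self_map_half_square_iter])

lemma bounded_op_comp_op: "bounded_op comp_op"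
  using unital_endo_comp_op by (simp add: unital_endo_def)

lemma essnorm_comp_op_funpow_le:
  "essnorm (comp_op ^^ n) \<le> 2 * (1/2) powr (real n * (real n - 1) / 2)"
proof -
  interpret C1_self_map "half_square_iter n" "half_square_iter_deriv n"
    by (rule C1_self_map_half_square_iter)
  show ?thesis
    unfolding prod_half_powers[symmetric]
  proof (rule essnorm_le_if_eq_compose_C1)
    show "bounded_op (comp_op ^^ n)"
      by (rule bounded_op_funpow[OF bounded_op_comp_op])
    show "(comp_op ^^ n) f = compose_C1 (half_square_iter n) f" if "f \<in> C1" for f
      using that by (rule comp_op_funpow)
    fix x :: real assume x: "x \<in> {0..1}"
    show "\<bar>half_square_iter_deriv n x\<bar> \<le> (\<Prod>k<n. (1/2) ^ k)"
      using half_square_iter_deriv_bounds[OF x] by simp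
    then show "\<bar>half_square_iter n x\<bar> \<le> (\<Prod>k<n. (1/2) ^ k)"
      using half_square_iter_le_deriv[OF x, of n] half_square_iter_le_pow[OF x, of n] by simp
  qed
qed

lemma riesz_op_comp_op: "riesz_op comp_op"
  unfolding riesz_op_def
proof (intro conjI bounded_op_comp_op)
  have lim: "(\<lambda>n::nat. (2 * (1/2) powr (real n * (real n - 1) / 2)) powr (1 / real n)) \<longlonglongrightarrow> 0"
    by real_asymp
  have le: "root n (essnorm (comp_op ^^ n))
      \<le> (2 * (1/2) powr (real n * (real n - 1) / 2)) powr (1 / real n)" if "n \<ge> 1" for n
  proof -
    have "root n (essnorm (comp_op ^^ n)) \<le> root n (2 * (1/2) powr (real n * (real n - 1) / 2))"
      using that essnorm_comp_op_funpow_le by (intro real_root_le_mono) auto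
    then show ?thesis
      using that by (simp add: root_powr_inverse)
  qed
  have nonneg: "0 \<le> root n (essnorm (comp_op ^^ n))" for n
    using essnorm_nonneg[OF bounded_op_funpow[OF bounded_op_comp_op], of n]
    by (simp add: real_root_ge_zero)
  show "(\<lambda>n. root n (essnorm (comp_op ^^ n))) \<longlonglongrightarrow> 0"
    by (rule tendsto_sandwich[OF always_eventually eventually_sequentiallyI tendsto_const lim])
      (use nonneg le in auto)
qed

lemma not_power_compact_comp_op: "\<not> power_compact comp_op"
proof
  assume "power_compact comp_op"
  then obtain N where "compact_C1op (comp_op ^^ N)"
    unfolding power_compact_def by blast
  moreover have "\<not> compact_C1op (comp_op ^^ N)"
    by (rule C1_self_map.not_compact_C1op_if_eq_compose_C1[OF C1_self_map_half_square_iter])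
      (simp_all add: comp_op_funpow half_square_iter_less_at_1 less_imp_neq
        half_square_iter_deriv_1_pos[THEN less_imp_neq, symmetric])
  ultimately show False by contradiction
qed

theorem corollary3p2:
  shows "(\<exists>T. unital_endo T \<and> riesz_op T \<and> \<not> power_compact T)
       \<and> (unital_endo comp_op \<and> riesz_op comp_op \<and> \<not> power_compact comp_op)"
  using unital_endo_comp_op riesz_op_comp_op not_power_compact_comp_op by blast

end
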